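(* Let $S$ be a normal submonoid of $M_{N\times N}(\mathbb{C})$, with inclusion $\iota$, which is the closure of a reductive subgroup $H=L_{\mathbb{C}}$ of $GL(N,\mathbb{C})$, where $L=H\cap U(N)$. Let $\mu_L:S\to\mathfrak{l}^*$ and $\mu:M_{N\times N}(\mathbb{C})\to\mathfrak{u}(N)^*$ be the moment maps for the right actions $\mathcal{R}$ of $L$ on $S$ and of $U(N)$ on $M_{N\times N}(\mathbb{C})$, respectively. Let $\eta:\mu_L(S)\to(\mu\circ\iota)(S)$ be the inverse of the homeomorphism $(d\iota)^*:(\mu\circ\iota)(S)\to\mu_L(S)$. Let $s$ be the section of $\mu$ given by $s(B)=\sqrt{-iB}$, the positive semidefinite square root, for $B$ in the image of $\mu$. Then the composition $s_L:=s\circ\eta$ takes values in $S$, and hence $s_L$ is a section (right inverse) of $\mu_L$.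
   Context: $M_{N\times N}(\mathbb{C})$ carries the Euclidean Kähler form $\omega_E(A,B)=-\operatorname{Im}\operatorname{Tr}(AB^* )$, restricted to $S$. With the identification $\mathfrak{u}(N)\cong\mathfrak{u}(N)^*$ via $\langle A,B\rangle=-\operatorname{Tr}(AB)$ one has $\mu(A)=iA^*A$. The map $(d\iota)^*$ is dual to the inclusion $\mathfrak{l}\hookrightarrow\mathfrak{u}(N)$, and $(d\iota)^*\circ\mu\circ\iota=\mu_L$. *)

theory Defs
  imports "HOL-Analysis.Analysis"
begin

type_synonym 'n cmat = "complex^'n^'n"

definition adj :: "'n::finite cmat \<Rightarrow> 'n cmat" where
  "adj A = (\<chi> i j. cnj (A $ j $ i))"

definition csmul :: "complex \<Rightarrow> 'n::finite cmat \<Rightarrow> 'n cmat" where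
  "csmul c A = (\<chi> i j. c * A $ i $ j)"

primrec mpow :: "'n::finite cmat \<Rightarrow> nat \<Rightarrow> 'n cmat" where
  "mpow A 0 = mat 1"
| "mpow A (Suc k) = A ** mpow A k"

definition mexp :: "'n::finite cmat \<Rightarrow> 'n cmat" where
  "mexp A = (\<Sum>k. (1 / fact k) *\<^sub>R mpow A k)"

definition unitary_group :: "'n::finite cmat set" where
  "unitary_group = {U. adj U ** U = mat 1}"

definition u_alg :: "'n::finite cmat set" where
  "u_alg = {X. adj X = - X}"

definition lie_alg :: "'n::finite cmat set \<Rightarrow> 'n cmat set" where
  "lie_alg L = {X. \<forall>t::real. mexp (t *\<^sub>R X) \<in> L}"

definition complexification :: "'n::finite cmat set \<Rightarrow> 'n cmat set" where
  "complexification L = {k ** mexp (csmul \<i> X) | k X. k \<in> L \<and> X \<in> lie_alg L}"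

definition upair :: "'n::finite cmat \<Rightarrow> 'n cmat \<Rightarrow> real" where
  "upair A B = Re (- trace (A ** B))"

text \<open>Moment map mu(A) = i A^* A of the right U(N)-action, as element of u(N) = u(N)^*.\<close>
definition mu :: "'n::finite cmat \<Rightarrow> 'n cmat" where
  "mu A = csmul \<i> (adj A ** A)"

text \<open>(d iota)^* : u(N)^* -> l^*, dual to the inclusion l -> u(N); an element of l^* is
  represented as a real functional on matrices supported on l.\<close>
definition dstar :: "'n::finite cmat set \<Rightarrow> 'n cmat \<Rightarrow> ('n cmat \<Rightarrow> real)" where
  "dstar L B = (\<lambda>X. if X \<in> lie_alg L then upair B X else 0)"

definition muL :: "'n::finite cmat set \<Rightarrow> 'n cmat \<Rightarrow> ('n cmat \<Rightarrow> real)" where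
  "muL L A = dstar L (mu A)"

definition hermitian :: "'n::finite cmat \<Rightarrow> bool" where
  "hermitian P \<longleftrightarrow> adj P = P"

definition psd :: "'n::finite cmat \<Rightarrow> bool" where
  "psd P \<longleftrightarrow> hermitian P \<and> (\<forall>x::complex^'n. 0 \<le> Re (\<Sum>i\<in>UNIV. cnj (x $ i) * (P *v x) $ i))"

definition msqrt :: "'n::finite cmat \<Rightarrow> 'n cmat" where
  "msqrt M = (THE P. psd P \<and> P ** P = M)"

definition sec :: "'n::finite cmat \<Rightarrow> 'n cmat" where
  "sec B = msqrt (csmul (- \<i>) B)"

inductive_set polyfun :: "('n::finite cmat \<Rightarrow> complex) set" where
  const: "(\<lambda>A. c) \<in> polyfun"
| coord: "(\<lambda>A. A $ i $ j) \<in> polyfun"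
| add: "f \<in> polyfun \<Longrightarrow> g \<in> polyfun \<Longrightarrow> (\<lambda>A. f A + g A) \<in> polyfun"
| mult: "f \<in> polyfun \<Longrightarrow> g \<in> polyfun \<Longrightarrow> (\<lambda>A. f A * g A) \<in> polyfun"

text \<open>Normality of the affine variety S: its coordinate ring C[S] (polynomial functions
  restricted to S; reduced) is integrally closed in its total ring of fractions.\<close>
definition nonzerodiv_on :: "'n::finite cmat set \<Rightarrow> ('n cmat \<Rightarrow> complex) \<Rightarrow> bool" where
  "nonzerodiv_on S g \<longleftrightarrow>
     (\<forall>h\<in>polyfun. (\<forall>A\<in>S. h A * g A = 0) \<longrightarrow> (\<forall>A\<in>S. h A = 0))"

definition normal_variety :: "'n::finite cmat set \<Rightarrow> bool" where
  "normal_variety S \<longleftrightarrow>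
     (\<forall>f\<in>polyfun. \<forall>g\<in>polyfun. nonzerodiv_on S g \<longrightarrow>
        (\<exists>n>0. \<exists>a::nat \<Rightarrow> ('n cmat \<Rightarrow> complex). (\<forall>k<n. a k \<in> polyfun) \<and>
            (\<forall>A\<in>S. f A ^ n + (\<Sum>k<n. a k A * f A ^ k * g A ^ (n - k)) = 0))
        \<longrightarrow> (\<exists>h\<in>polyfun. \<forall>A\<in>S. f A = h A * g A))"

end

theory Submission
  imports Defs
begin

text \<open>For \<open>A = k exp(iX)\<close> in \<open>L\<^sub>\<complex>\<close> with \<open>X\<close> skew-Hermitian, \<open>P = exp(iX)\<close> is Hermitian with
  \<open>P\<^sup>2 = A\<^sup>*A\<close>, and it is positive semidefinite because it is the square of the Hermitian matrix
  \<open>exp(iX/2)\<close>; moreover \<open>P \<in> L\<^sub>\<complex>\<close>. This passes to the closure \<open>S\<close>: the square root has the same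
  Frobenius norm as \<open>A\<close>, so along a sequence in \<open>L\<^sub>\<complex>\<close> converging to \<open>A \<in> S\<close> the roots have a
  convergent subsequence, whose limit is a positive semidefinite root of \<open>A\<^sup>*A\<close> in \<open>S\<close>. By
  uniqueness of positive square roots this limit is \<open>s(\<mu>(A)) = \<surd>(A\<^sup>*A)\<close>, and
  \<open>\<mu>(s(\<mu> A)) = \<mu>(A)\<close>, so \<open>s \<circ> \<eta>\<close> maps into \<open>S\<close> and is a section of \<open>\<mu>\<^sub>L\<close>.\<close>

lemma adj_nth [simp]: "adj A $ i $ j = cnj (A $ j $ i)"
  by (simp add: adj_def)

lemma adj_adj [simp]: "adj (adj A) = A"
  by (simp add: vec_eq_iff)

lemma adj_mat_1 [simp]: "adj (mat 1 :: 'n::finite cmat) = mat 1"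
  by (simp add: vec_eq_iff mat_def)

lemma adj_matrix_mult: "adj (A ** B) = adj B ** adj (A::'n::finite cmat)"
  by (simp add: vec_eq_iff matrix_matrix_mult_def mult.commute)

lemma adj_add: "adj (A + B) = adj A + adj (B::'n::finite cmat)"
  by (simp add: vec_eq_iff)

lemma adj_diff: "adj (A - B) = adj A - adj (B::'n::finite cmat)"
  by (simp add: vec_eq_iff)

lemma adj_scaleR: "adj (c *\<^sub>R A) = c *\<^sub>R adj (A::'n::finite cmat)"
  by (simp add: vec_eq_iff)

lemma bounded_linear_adj: "bounded_linear (adj :: 'n::finite cmat \<Rightarrow> 'n cmat)"
  by (simp add: linear_conv_bounded_linear[symmetric] linearI adj_add adj_scaleR)

lemma matrix_mult_diff_left: "((A::'n::finite cmat) - B) ** C = A ** C - B ** C"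
  by (simp add: vec_eq_iff matrix_matrix_mult_def sum_subtractf left_diff_distrib)

lemma matrix_mult_diff_right: "(A::'n::finite cmat) ** (B - C) = A ** B - A ** C"
  by (simp add: vec_eq_iff matrix_matrix_mult_def sum_subtractf right_diff_distrib)

lemma matrix_add_rdistrib: "((A::'n::finite cmat) + B) ** C = A ** C + B ** C"
  by (simp add: vec_eq_iff matrix_matrix_mult_def sum.distrib distrib_right)

lemma matrix_mult_axis_nth: "((M::'n::finite cmat) *v axis j 1) $ i = M $ i $ j"
  unfolding matrix_vector_mult_def axis_def by (simp add: if_distrib cong: if_cong)

lemma matrix_eq_0_if_columns_0: "(\<And>j. (M::'n::finite cmat) *v axis j 1 = 0) \<Longrightarrow> M = 0"
  using matrix_mult_axis_nth by (metis vec_eq_iff zero_index)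

lemma tendsto_matrix_mult:
  assumes "(f \<longlongrightarrow> a) F" "(g \<longlongrightarrow> b) F"
  shows "((\<lambda>n. f n ** g n) \<longlongrightarrow> a ** (b::'n::finite cmat)) F"
proof (rule vec_tendstoI, rule vec_tendstoI)
  fix i j
  show "((\<lambda>n. (f n ** g n) $ i $ j) \<longlongrightarrow> (a ** b) $ i $ j) F"
    unfolding matrix_matrix_mult_def vec_lambda_beta
    by (intro tendsto_sum tendsto_mult tendsto_vec_nth assms)
qed

subsection \<open>Positive semidefinite matrices\<close>

definition cinner :: "complex^'n::finite \<Rightarrow> complex^'n \<Rightarrow> complex" where
  "cinner x y = (\<Sum>i\<in>UNIV. cnj (x $ i) * y $ i)"

lemma psd_iff: "psd P \<longleftrightarrow> adj P = P \<and> (\<forall>x. 0 \<le> Re (cinner x (P *v x)))"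
  unfolding psd_def hermitian_def cinner_def ..

lemma cinner_add_left: "cinner (x + y) w = cinner x w + cinner y w"
  unfolding cinner_def by (simp add: sum.distrib distrib_right)

lemma cinner_add_right: "cinner w (x + y) = cinner w x + cinner w y"
  unfolding cinner_def by (simp add: sum.distrib distrib_left)

lemma cinner_scale_left: "cinner (c *s x) w = cnj c * cinner x w"
  unfolding cinner_def by (simp add: sum_distrib_left mult.assoc)

lemma cinner_scale_right: "cinner w (c *s x) = c * cinner w x"
  unfolding cinner_def sum_distrib_left by (rule sum.cong) auto

lemma cinner_axis: "cinner (axis j 1) w = w $ j"
proof -
  have "cnj (axis j 1 $ i) * w $ i = (if i = j then w $ i else 0)" for i
    by (simp add: axis_def)
  then show ?thesis
    unfolding cinner_def by simp
qed

lemma matrix_vector_mult_scale: "(A::'n::finite cmat) *v (c *s x) = c *s (A *v x)"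
  unfolding vec_eq_iff matrix_vector_mult_def by (simp add: sum_distrib_left mult.left_commute)

lemma cinner_matrix_adj: "cinner x (M *v y) = cinner (adj M *v x) (y::complex^'n::finite)"
proof -
  have "cinner x (M *v y) = (\<Sum>i\<in>UNIV. \<Sum>j\<in>UNIV. cnj (x $ i) * (M $ i $ j * y $ j))"
    unfolding cinner_def matrix_vector_mult_def by (simp add: sum_distrib_left)
  also have "\<dots> = (\<Sum>j\<in>UNIV. \<Sum>i\<in>UNIV. cnj (x $ i) * (M $ i $ j * y $ j))"
    by (rule sum.swap)
  also have "\<dots> = cinner (adj M *v x) y"
    unfolding cinner_def matrix_vector_mult_def
    by (simp add: sum_distrib_left sum_distrib_right mult_ac)
  finally show ?thesis .
qed

lemma cinner_self: "cinner x x = of_real (\<Sum>i\<in>UNIV. (cmod (x $ i))\<^sup>2)"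
  unfolding cinner_def of_real_sum
  by (rule sum.cong) (auto simp: complex_norm_square[symmetric] mult.commute)

lemma cinner_self_nonneg: "0 \<le> Re (cinner x x)"
  by (simp add: cinner_self sum_nonneg)

lemma cinner_self_eq_0:
  assumes "cinner x x = 0"
  shows "x = (0::complex^'n::finite)"
proof -
  have "(\<Sum>i\<in>UNIV. (cmod (x $ i))\<^sup>2) = 0"
    using assms unfolding cinner_self by (metis of_real_eq_0_iff)
  then show ?thesis
    by (simp add: sum_nonneg_eq_0_iff vec_eq_iff)
qed

lemma psd_square_hermitian:
  assumes "hermitian F"
  shows "psd (F ** (F::'n::finite cmat))"
proof -
  have "cinner x ((F ** F) *v x) = cinner (F *v x) (F *v x)" for x
    using cinner_matrix_adj[of x F "F *v x"] assms
    by (simp add: hermitian_def matrix_vector_mul_assoc)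
  then show ?thesis
    using assms by (simp add: psd_iff hermitian_def adj_matrix_mult cinner_self_nonneg)
qed

lemma psd_limit:
  assumes psd: "\<And>n. psd (P n)" and lim: "P \<longlonglongrightarrow> (l::'n::finite cmat)"
  shows "psd l"
proof -
  have "(\<lambda>n. adj (P n)) \<longlonglongrightarrow> adj l"
    by (rule bounded_linear.tendsto[OF bounded_linear_adj lim])
  moreover have "(\<lambda>n. adj (P n)) = P"
    using psd by (simp add: psd_iff fun_eq_iff)
  ultimately have "adj l = l"
    using lim LIMSEQ_unique by metis
  moreover have "0 \<le> Re (cinner x (l *v x))" for x
  proof (rule LIMSEQ_le_const)
    show "(\<lambda>n. Re (cinner x (P n *v x))) \<longlonglongrightarrow> Re (cinner x (l *v x))"
      unfolding cinner_def matrix_vector_mult_def vec_lambda_beta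
      by (intro tendsto_Re tendsto_sum tendsto_mult tendsto_const tendsto_vec_nth lim)
    show "\<exists>N. \<forall>n\<ge>N. 0 \<le> Re (cinner x (P n *v x))"
      using psd by (auto simp: psd_iff)
  qed
  ultimately show ?thesis by (simp add: psd_iff)
qed

lemma psd_kernel:
  assumes "psd P" and "Re (cinner y (P *v y)) = 0"
  shows "P *v y = 0"
proof -
  define z where "z = P *v y"
  define s where "s = Re (cinner z z)"
  define c where "c = Re (cinner z (P *v z))"
  have herm: "adj P = P" and pos: "\<And>x. 0 \<le> Re (cinner x (P *v x))"
    using assms(1) by (auto simp: psd_iff)
  have "c \<ge> 0" "s \<ge> 0"
    using pos cinner_self_nonneg by (auto simp: c_def s_def)
  have "cinner y (P *v z) = cinner z z"
    using cinner_matrix_adj[of y P z] herm by (simp add: z_def)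
  then have quadratic: "0 \<le> 2 * t * s + t\<^sup>2 * c" for t :: real
    using pos[of "y + of_real t *s z"] assms(2)
    unfolding matrix_vector_right_distrib matrix_vector_mult_scale cinner_add_left
      cinner_add_right cinner_scale_left cinner_scale_right
    by (simp add: s_def c_def z_def[symmetric] power2_eq_square algebra_simps)
  \<comment> \<open>a quadratic in \<open>t\<close> with root \<open>0\<close> stays nonnegative only if its linear coefficient vanishes\<close>
  have "s = 0"
  proof (rule ccontr)
    assume "s \<noteq> 0"
    define t where "t = - s / (c + 1)"
    have "t \<noteq> 0" and s_eq: "s = - t * (c + 1)"
      using \<open>s \<noteq> 0\<close> \<open>c \<ge> 0\<close> by (auto simp: t_def)
    have "2 * t * s + t\<^sup>2 * c = - (t\<^sup>2) * (c + 2)"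
      by (simp add: s_eq power2_eq_square algebra_simps)
    also have "\<dots> < 0"
      using \<open>t \<noteq> 0\<close> \<open>c \<ge> 0\<close> by simp
    finally show False
      using quadratic[of t] by simp
  qed
  then have "cinner z z = 0"
    by (simp add: s_def cinner_self)
  then show ?thesis
    using cinner_self_eq_0 z_def by blast
qed

lemma cinner_adj_diag:
  "cinner ((D::'n::finite cmat) *v axis j 1) (M *v (D *v axis j 1)) = (adj D ** M ** D) $ j $ j"
  using cinner_matrix_adj[of "axis j 1" "adj D" "M *v (D *v axis j 1)"]
  by (simp add: cinner_axis matrix_vector_mul_assoc matrix_mul_assoc matrix_mult_axis_nth)

text \<open>If \<open>D = P - Q\<close> then \<open>PD + DQ = P\<^sup>2 - Q\<^sup>2 = 0\<close>, so \<open>tr(DPD) + tr(DQD) = 0\<close>; both traces are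
  sums of the nonnegative numbers \<open>\<langle>De\<^sub>j, P De\<^sub>j\<rangle>\<close>, \<open>\<langle>De\<^sub>j, Q De\<^sub>j\<rangle>\<close>, which therefore vanish.
  Hence \<open>PD = QD = 0\<close>, so \<open>D\<^sup>2 = 0\<close> and \<open>D = 0\<close> as \<open>D\<close> is Hermitian.\<close>

lemma psd_sqrt_unique:
  assumes P: "psd P" and Q: "psd Q" and PQ: "P ** P = Q ** (Q::'n::finite cmat)"
  shows "P = Q"
proof -
  define D where "D = P - Q"
  have "adj D = D"
    using P Q by (simp add: D_def adj_diff psd_iff)
  define f where "f j = Re (cinner (D *v axis j 1) (P *v (D *v axis j 1)))" for j
  define g where "g j = Re (cinner (D *v axis j 1) (Q *v (D *v axis j 1)))" for j
  have f_nonneg: "0 \<le> f j" and g_nonneg: "0 \<le> g j" for j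
    using P Q by (auto simp: psd_iff f_def g_def)
  have "P ** D + D ** Q = 0"
    by (simp add: D_def matrix_mult_diff_left matrix_mult_diff_right PQ matrix_mul_assoc)
  have "(\<Sum>j\<in>UNIV. f j + g j) = Re (trace (D ** P ** D) + trace (D ** Q ** D))"
    using \<open>adj D = D\<close> by (simp add: f_def g_def cinner_adj_diag trace_def sum.distrib)
  also have "trace (D ** Q ** D) = trace (D ** (D ** Q))"
    using trace_mul_sym[of "D ** Q" D] by (simp add: matrix_mul_assoc)
  also have "trace (D ** P ** D) + trace (D ** (D ** Q)) = trace (D ** (P ** D + D ** Q))"
    by (simp add: matrix_add_ldistrib trace_add matrix_mul_assoc)
  also have "\<dots> = 0"
    using \<open>P ** D + D ** Q = 0\<close> by (simp add: trace_def)
  finally have "(\<Sum>j\<in>UNIV. f j + g j) = 0"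
    by simp
  then have "f j + g j = 0" for j
    using f_nonneg g_nonneg by (subst (asm) sum_nonneg_eq_0_iff) (auto simp: add_nonneg_nonneg)
  then have "f j = 0 \<and> g j = 0" for j
    by (metis add_nonneg_eq_0_iff f_nonneg g_nonneg)
  then have "P ** D = 0" "Q ** D = 0"
    using psd_kernel[OF P] psd_kernel[OF Q]
    by (auto intro!: matrix_eq_0_if_columns_0 simp: f_def g_def matrix_vector_mul_assoc[symmetric])
  then have "D ** D = 0"
    using matrix_mult_diff_left[of P Q D] by (simp add: D_def)
  have "D *v axis j 1 = 0" for j
  proof (rule cinner_self_eq_0)
    have "cinner (D *v axis j 1) (D *v axis j 1) = cinner ((D ** D) *v axis j 1) (axis j 1)"
      using cinner_matrix_adj[of "D *v axis j 1" D "axis j 1"] \<open>adj D = D\<close>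
      by (simp add: matrix_vector_mul_assoc)
    then show "cinner (D *v axis j 1) (D *v axis j 1) = 0"
      using \<open>D ** D = 0\<close> by (simp add: cinner_def)
  qed
  then have "D = 0"
    by (rule matrix_eq_0_if_columns_0)
  then show ?thesis
    by (simp add: D_def)
qed

lemma msqrt_eqI: "psd P \<Longrightarrow> P ** P = M \<Longrightarrow> msqrt M = P"
  unfolding msqrt_def by (blast intro: the_equality psd_sqrt_unique)

subsection \<open>The matrix exponential\<close>

text \<open>To reuse the exponential of a Banach algebra, the matrices are given the maximum row sum
  norm, which (unlike the Frobenius norm inherited from \<open>complex^'n^'n\<close>) is submultiplicative
  with \<open>\<parallel>1\<parallel> = 1\<close>.\<close>

definition row_sum_norm :: "'n::finite cmat \<Rightarrow> real" where
  "row_sum_norm M = Max (range (\<lambda>i. \<Sum>j\<in>UNIV. norm (M $ i $ j)))"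

lemma row_sum_le_row_sum_norm: "(\<Sum>j\<in>UNIV. norm (M $ i $ j)) \<le> row_sum_norm M"
  unfolding row_sum_norm_def by (rule Max_ge) auto

lemma row_sum_norm_le:
  "(\<And>i. (\<Sum>j\<in>UNIV. norm ((M::'n::finite cmat) $ i $ j)) \<le> c) \<Longrightarrow> row_sum_norm M \<le> c"
  unfolding row_sum_norm_def by (subst Max_le_iff) auto

lemma norm_nth_le_row_sum_norm: "norm ((M::'n::finite cmat) $ i $ j) \<le> row_sum_norm M"
  using member_le_sum[of j UNIV "\<lambda>j. norm (M $ i $ j)"] row_sum_le_row_sum_norm[of M i]
  by simp

lemma row_sum_norm_nonneg: "0 \<le> row_sum_norm (M::'n::finite cmat)"
  using norm_nth_le_row_sum_norm[of M] norm_ge_zero order_trans by blast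

lemma row_sum_norm_eq_0_iff: "row_sum_norm (M::'n::finite cmat) = 0 \<longleftrightarrow> M = 0"
proof
  assume "row_sum_norm M = 0"
  then have "norm (M $ i $ j) = 0" for i j
    using norm_nth_le_row_sum_norm[of M i j] norm_ge_zero[of "M $ i $ j"] by linarith
  then show "M = 0"
    by (simp add: vec_eq_iff)
qed (simp add: row_sum_norm_def)

lemma row_sum_norm_triangle: "row_sum_norm ((A::'n::finite cmat) + B) \<le> row_sum_norm A + row_sum_norm B"
proof (rule row_sum_norm_le)
  fix i
  have "(\<Sum>j\<in>UNIV. norm ((A + B) $ i $ j)) \<le> (\<Sum>j\<in>UNIV. norm (A $ i $ j) + norm (B $ i $ j))"
    by (rule sum_mono) (simp add: norm_triangle_ineq)
  also have "\<dots> \<le> row_sum_norm A + row_sum_norm B"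
    by (simp add: sum.distrib add_mono row_sum_le_row_sum_norm)
  finally show "(\<Sum>j\<in>UNIV. norm ((A + B) $ i $ j)) \<le> row_sum_norm A + row_sum_norm B" .
qed

lemma row_sum_norm_scaleR: "row_sum_norm (c *\<^sub>R (A::'n::finite cmat)) = \<bar>c\<bar> * row_sum_norm A"
proof -
  have "row_sum_norm (c *\<^sub>R A) = Max (range (\<lambda>i. \<bar>c\<bar> * (\<Sum>j\<in>UNIV. norm (A $ i $ j))))"
    unfolding row_sum_norm_def by (simp add: sum_distrib_left)
  also have "\<dots> = \<bar>c\<bar> * row_sum_norm A"
    unfolding row_sum_norm_def
    by (subst mono_Max_commute[where f="\<lambda>x. \<bar>c\<bar> * x"])
      (auto simp: mono_def mult_left_mono image_image)
  finally show ?thesis .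
qed

lemma row_sum_norm_mult: "row_sum_norm ((A::'n::finite cmat) ** B) \<le> row_sum_norm A * row_sum_norm B"
proof (rule row_sum_norm_le)
  fix i
  have "(\<Sum>j\<in>UNIV. norm ((A ** B) $ i $ j))
      \<le> (\<Sum>j\<in>UNIV. \<Sum>k\<in>UNIV. norm (A $ i $ k) * norm (B $ k $ j))"
    unfolding matrix_matrix_mult_def
    by (rule sum_mono) (simp, rule order_trans[OF norm_sum], simp add: norm_mult)
  also have "\<dots> = (\<Sum>k\<in>UNIV. norm (A $ i $ k) * (\<Sum>j\<in>UNIV. norm (B $ k $ j)))"
    by (subst sum.swap) (simp add: sum_distrib_left)
  also have "\<dots> \<le> (\<Sum>k\<in>UNIV. norm (A $ i $ k) * row_sum_norm B)"
    by (rule sum_mono) (simp add: mult_left_mono row_sum_le_row_sum_norm)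
  also have "\<dots> \<le> row_sum_norm A * row_sum_norm B"
    by (simp add: sum_distrib_right[symmetric] mult_right_mono row_sum_le_row_sum_norm
        row_sum_norm_nonneg)
  finally show "(\<Sum>j\<in>UNIV. norm ((A ** B) $ i $ j)) \<le> row_sum_norm A * row_sum_norm B" .
qed

lemma row_sum_norm_mat_1: "row_sum_norm (mat 1 :: 'n::finite cmat) = 1"
proof -
  have "(\<Sum>j\<in>UNIV. norm ((mat 1 :: 'n cmat) $ i $ j)) = (\<Sum>j\<in>UNIV. if j = i then 1 else 0)" for i
    by (rule sum.cong) (auto simp: mat_def)
  then show ?thesis
    unfolding row_sum_norm_def by simp
qed

lemma norm_le_row_sum_norm: "norm (M::'n::finite cmat) \<le> real CARD('n) * row_sum_norm M"
proof -
  have "norm M \<le> (\<Sum>i\<in>UNIV. norm (M $ i))"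
    unfolding norm_vec_def by (rule L2_set_le_sum) auto
  also have "\<dots> \<le> (\<Sum>i\<in>UNIV. \<Sum>j\<in>UNIV. norm (M $ i $ j))"
    by (rule sum_mono) (simp add: norm_vec_def L2_set_le_sum)
  also have "\<dots> \<le> (\<Sum>i\<in>(UNIV::'n set). row_sum_norm M)"
    by (rule sum_mono) (rule row_sum_le_row_sum_norm)
  finally show ?thesis by simp
qed

lemma row_sum_norm_le_norm: "row_sum_norm (M::'n::finite cmat) \<le> real CARD('n) * norm M"
proof (rule row_sum_norm_le)
  fix i
  have "(\<Sum>j\<in>UNIV. norm (M $ i $ j)) \<le> (\<Sum>j\<in>(UNIV::'n set). norm M)"
    by (rule sum_mono) (metis Finite_Cartesian_Product.norm_nth_le order_trans)
  then show "(\<Sum>j\<in>UNIV. norm (M $ i $ j)) \<le> real CARD('n) * norm M"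
    by simp
qed

typedef (overloaded) 'n matalg = "UNIV :: ('n::finite) cmat set"
  morphisms to_mat of_mat
  by simp

declare of_mat_inverse [simplified, simp] to_mat_inverse [simp]

lemma matalg_eq_iff: "x = y \<longleftrightarrow> to_mat x = to_mat y"
  by (simp add: to_mat_inject)

instantiation matalg :: (finite) ab_group_add
begin
definition "0 = of_mat 0"
definition "x + y = of_mat (to_mat x + to_mat y)"
definition "x - y = of_mat (to_mat x - to_mat y)"
definition "- x = of_mat (- to_mat x)"
instance
  by standard (simp_all add: matalg_eq_iff zero_matalg_def plus_matalg_def minus_matalg_def
      uminus_matalg_def algebra_simps)
end

lemma to_mat_zero [simp]: "to_mat 0 = 0"
  by (simp add: zero_matalg_def)
lemma to_mat_add [simp]: "to_mat (x + y) = to_mat x + to_mat y"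
  by (simp add: plus_matalg_def)
lemma to_mat_uminus [simp]: "to_mat (- x) = - to_mat x"
  by (simp add: uminus_matalg_def)

instantiation matalg :: (finite) real_vector
begin
definition "scaleR c x = of_mat (c *\<^sub>R to_mat x)"
instance
  by standard (simp_all add: matalg_eq_iff scaleR_matalg_def algebra_simps)
end

lemma to_mat_scaleR [simp]: "to_mat (c *\<^sub>R x) = c *\<^sub>R to_mat x"
  by (simp add: scaleR_matalg_def)

instantiation matalg :: (finite) ring_1
begin
definition "x * y = of_mat (to_mat x ** to_mat y)"
definition "1 = of_mat (mat 1)"
instance
proof
  fix a b c :: "'a matalg"
  show "a * b * c = a * (b * c)"
    by (simp add: matalg_eq_iff times_matalg_def matrix_mul_assoc)
  show "1 * a = a" "a * 1 = a"
    by (simp_all add: matalg_eq_iff times_matalg_def one_matalg_def)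
  show "(a + b) * c = a * c + b * c"
    by (simp add: matalg_eq_iff times_matalg_def matrix_add_rdistrib)
  show "a * (b + c) = a * b + a * c"
    by (simp add: matalg_eq_iff times_matalg_def matrix_add_ldistrib)
  have "(mat 1 :: 'a cmat) $ i $ i = 1" for i
    by (simp add: mat_def)
  then have "(mat 1 :: 'a cmat) \<noteq> 0"
    by (metis zero_index zero_neq_one)
  then show "(0::'a matalg) \<noteq> 1"
    by (simp add: matalg_eq_iff one_matalg_def)
qed
end

lemma to_mat_mult [simp]: "to_mat (x * y) = to_mat x ** to_mat y"
  by (simp add: times_matalg_def)
lemma to_mat_one [simp]: "to_mat 1 = mat 1"
  by (simp add: one_matalg_def)

instantiation matalg :: (finite) real_normed_algebra_1
begin
definition "norm x = row_sum_norm (to_mat x)"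
definition "sgn (x::'a matalg) = x /\<^sub>R norm x"
definition "dist (x::'a matalg) y = norm (x - y)"
definition "uniformity = (INF e\<in>{0 <..}. principal {(x::'a matalg, y). dist x y < e})"
definition "open (U::'a matalg set) \<longleftrightarrow>
  (\<forall>x\<in>U. eventually (\<lambda>(x', y). x' = x \<longrightarrow> y \<in> U) uniformity)"
instance
proof
  fix x y :: "'a matalg" and a :: real and U :: "'a matalg set"
  show "a *\<^sub>R x * y = a *\<^sub>R (x * y)"
    by (simp add: matalg_eq_iff scalar_matrix_assoc)
  show "x * a *\<^sub>R y = a *\<^sub>R (x * y)"
    by (simp add: matalg_eq_iff matrix_scalar_ac scalar_matrix_assoc)
  show "norm x = 0 \<longleftrightarrow> x = 0"
    by (simp add: norm_matalg_def row_sum_norm_eq_0_iff matalg_eq_iff)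
  show "norm (x + y) \<le> norm x + norm y"
    by (simp add: norm_matalg_def row_sum_norm_triangle)
  show "norm (a *\<^sub>R x) = \<bar>a\<bar> * norm x"
    by (simp add: norm_matalg_def row_sum_norm_scaleR)
  show "norm (x * y) \<le> norm x * norm y"
    by (simp add: norm_matalg_def row_sum_norm_mult)
  show "norm (1::'a matalg) = 1"
    by (simp add: norm_matalg_def row_sum_norm_mat_1)
qed (fact sgn_matalg_def dist_matalg_def uniformity_matalg_def open_matalg_def)+
end

lemma bounded_linear_to_mat: "bounded_linear (to_mat :: 'n::finite matalg \<Rightarrow> 'n cmat)"
  by (rule bounded_linear_intro[where K="real CARD('n)"])
    (simp_all add: norm_matalg_def, metis mult.commute norm_le_row_sum_norm)

lemma bounded_linear_of_mat: "bounded_linear (of_mat :: 'n cmat \<Rightarrow> 'n::finite matalg)"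
  by (rule bounded_linear_intro[where K="real CARD('n)"])
    (simp_all add: matalg_eq_iff norm_matalg_def, metis mult.commute row_sum_norm_le_norm)

instance matalg :: (finite) banach
proof
  fix X :: "nat \<Rightarrow> 'a matalg"
  assume "Cauchy X"
  then have "Cauchy (\<lambda>n. to_mat (X n))"
    by (rule bounded_linear.Cauchy[OF bounded_linear_to_mat])
  then obtain M where "(\<lambda>n. to_mat (X n)) \<longlonglongrightarrow> M"
    using Cauchy_convergent_iff convergent_def by blast
  from bounded_linear.tendsto[OF bounded_linear_of_mat this]
  show "convergent X"
    by (auto simp: convergent_def)
qed

lemma to_mat_power: "to_mat (x ^ k) = mpow (to_mat x) k"
  by (induction k) simp_all

lemma mexp_sums: "(\<lambda>k. (1 / fact k) *\<^sub>R mpow A k) sums to_mat (exp (of_mat A :: 'n::finite matalg))"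
proof -
  have "(\<lambda>k. (of_mat A :: 'n matalg) ^ k /\<^sub>R fact k) sums exp (of_mat A)"
    unfolding exp_def by (rule summable_sums[OF summable_exp_generic])
  from bounded_linear.sums[OF bounded_linear_to_mat this]
  show ?thesis
    by (simp add: to_mat_power divide_inverse_commute)
qed

lemma mexp_eq_exp: "mexp A = to_mat (exp (of_mat A :: 'n::finite matalg))"
  unfolding mexp_def using mexp_sums sums_unique by metis

lemma mexp_add_commuting:
  assumes "A ** B = B ** (A::'n::finite cmat)"
  shows "mexp (A + B) = mexp A ** mexp B"
proof -
  have "of_mat (A + B) = of_mat A + (of_mat B :: 'n matalg)"
    by (simp add: matalg_eq_iff)
  moreover have "exp (of_mat A + of_mat B :: 'n matalg) = exp (of_mat A) * exp (of_mat B)"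
    using assms by (intro exp_add_commuting) (simp add: matalg_eq_iff)
  ultimately show ?thesis
    unfolding mexp_eq_exp by simp
qed

lemma mpow_commute: "mpow A k ** A = A ** mpow (A::'n::finite cmat) k"
  by (induction k) (simp_all add: matrix_mul_assoc[symmetric])

lemma adj_mpow: "adj (mpow A k) = mpow (adj (A::'n::finite cmat)) k"
  by (induction k) (simp_all add: adj_matrix_mult mpow_commute)

lemma adj_mexp: "adj (mexp A) = mexp (adj (A::'n::finite cmat))"
proof -
  from bounded_linear.sums[OF bounded_linear_adj mexp_sums[of A]]
  have "(\<lambda>k. (1 / fact k) *\<^sub>R mpow (adj A) k) sums adj (mexp A)"
    by (simp add: adj_scaleR adj_mpow mexp_eq_exp)
  then show ?thesis
    unfolding mexp_def by (rule sums_unique)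
qed

text \<open>Differentiate \<open>exp(tX\<^sup>*) = exp(tX)\<^sup>* = exp(tX)\<^sup>-\<^sup>1 = exp(-tX)\<close> at \<open>t = 0\<close>.\<close>

lemma lie_alg_skew_adjoint:
  assumes "L \<subseteq> unitary_group" and "X \<in> lie_alg L"
  shows "adj X = - (X::'n::finite cmat)"
proof -
  define a :: "'n matalg" where "a = of_mat X"
  define b :: "'n matalg" where "b = of_mat (adj X)"
  have unitary: "exp (t *\<^sub>R b) * exp (t *\<^sub>R a) = 1" for t
  proof -
    have "mexp (t *\<^sub>R X) \<in> unitary_group"
      using assms unfolding lie_alg_def by blast
    then have "mexp (t *\<^sub>R adj X) ** mexp (t *\<^sub>R X) = mat 1"
      by (simp add: unitary_group_def adj_mexp adj_scaleR)
    then show ?thesis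
      by (simp add: mexp_eq_exp matalg_eq_iff a_def b_def scaleR_matalg_def)
  qed
  have exp_b: "exp (t *\<^sub>R b) = exp (t *\<^sub>R (- a))" for t
  proof -
    have "exp (t *\<^sub>R b) = exp (t *\<^sub>R b) * (exp (t *\<^sub>R a) * exp (- (t *\<^sub>R a)))"
      by (simp add: exp_minus_inverse)
    also have "\<dots> = exp (- (t *\<^sub>R a))"
      by (simp add: mult.assoc[symmetric] unitary)
    finally show ?thesis
      by simp
  qed
  have "((\<lambda>t. exp (t *\<^sub>R b)) has_vector_derivative b) (at 0)"
    using exp_scaleR_has_vector_derivative_right[of b 0 UNIV] by simp
  moreover have "((\<lambda>t. exp (t *\<^sub>R b)) has_vector_derivative (- a)) (at 0)"
    unfolding exp_b using exp_scaleR_has_vector_derivative_right[of "- a" 0 UNIV] by simp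
  ultimately have "b = - a"
    by (rule vector_derivative_unique_at)
  then show ?thesis
    by (simp add: matalg_eq_iff a_def b_def)
qed

subsection \<open>Positive square roots of \<open>A\<^sup>*A\<close> in \<open>L\<^sub>\<complex>\<close> and its closure\<close>

lemma hermitian_csmul_ii:
  assumes "adj X = - X"
  shows "hermitian (csmul \<i> (X::'n::finite cmat))"
proof -
  have "cnj (X $ j $ i) = - X $ i $ j" for i j
    using arg_cong[OF assms, of "\<lambda>M. M $ i $ j"] by simp
  then show ?thesis
    by (simp add: hermitian_def vec_eq_iff csmul_def)
qed

lemma complexification_psd_sqrt:
  assumes "L \<subseteq> unitary_group" and "mat 1 \<in> L" and "A \<in> complexification L"
  shows "\<exists>P\<in>complexification L. psd P \<and> P ** P = adj A ** (A::'n::finite cmat)"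
proof -
  obtain k X where A: "A = k ** mexp (csmul \<i> X)" and "k \<in> L" and X: "X \<in> lie_alg L"
    using assms(3) unfolding complexification_def by blast
  define M where "M = csmul \<i> X"
  define P where "P = mexp M"
  have "adj M = M"
    using hermitian_csmul_ii[OF lie_alg_skew_adjoint[OF assms(1) X]] by (simp add: M_def hermitian_def)
  then have "adj P = P"
    by (simp add: P_def adj_mexp)
  have "adj k ** k = mat 1"
    using \<open>k \<in> L\<close> assms(1) by (auto simp: unitary_group_def)
  moreover have "adj A ** A = P ** (adj k ** k) ** P"
    by (simp add: A M_def[symmetric] P_def[symmetric] adj_matrix_mult \<open>adj P = P\<close> matrix_mul_assoc)
  ultimately have "P ** P = adj A ** A"
    by simp
  moreover have "psd P"
  proof -
    define F where "F = mexp ((1/2) *\<^sub>R M)"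
    have "F ** F = P"
      using mexp_add_commuting[of "(1/2) *\<^sub>R M" "(1/2) *\<^sub>R M"]
      by (simp add: F_def P_def scaleR_add_left[symmetric])
    moreover have "hermitian F"
      by (simp add: hermitian_def F_def adj_mexp adj_scaleR \<open>adj M = M\<close>)
    ultimately show ?thesis
      using psd_square_hermitian by metis
  qed
  moreover have "P = mat 1 ** mexp (csmul \<i> X)"
    by (simp add: P_def M_def)
  then have "P \<in> complexification L"
    unfolding complexification_def using assms(2) X by blast
  ultimately show ?thesis
    by blast
qed

lemma norm_eq_sum_nth_column_squares:
  "(norm (M::'n::finite cmat))\<^sup>2 = (\<Sum>j\<in>UNIV. \<Sum>i\<in>UNIV. (cmod (M $ i $ j))\<^sup>2)"
proof -
  have "(norm M)\<^sup>2 = (\<Sum>i\<in>UNIV. \<Sum>j\<in>UNIV. (cmod (M $ i $ j))\<^sup>2)"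
    unfolding norm_vec_def L2_set_def by (simp add: sum_nonneg)
  also have "\<dots> = (\<Sum>j\<in>UNIV. \<Sum>i\<in>UNIV. (cmod (M $ i $ j))\<^sup>2)"
    by (rule sum.swap)
  finally show ?thesis .
qed

lemma adj_mult_self_diag: "(adj M ** (M::'n::finite cmat)) $ j $ j = of_real (\<Sum>i\<in>UNIV. (cmod (M $ i $ j))\<^sup>2)"
  unfolding matrix_matrix_mult_def of_real_sum
  by (simp, rule sum.cong) (auto simp: complex_norm_square[symmetric] mult.commute)

lemma norm_hermitian_sqrt:
  assumes "hermitian P" and "P ** P = adj A ** (A::'n::finite cmat)"
  shows "norm P = norm A"
proof -
  have "(norm P)\<^sup>2 = (\<Sum>j\<in>UNIV. Re ((adj P ** P) $ j $ j))"
    by (simp add: norm_eq_sum_nth_column_squares adj_mult_self_diag)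
  also have "\<dots> = (\<Sum>j\<in>UNIV. Re ((adj A ** A) $ j $ j))"
    using assms by (simp add: hermitian_def)
  also have "\<dots> = (norm A)\<^sup>2"
    by (simp add: norm_eq_sum_nth_column_squares adj_mult_self_diag)
  finally show ?thesis
    by (simp add: power2_eq_iff_nonneg)
qed

lemma closure_psd_sqrt:
  assumes H_sqrt: "\<And>A. A \<in> H \<Longrightarrow> \<exists>P\<in>H. psd P \<and> P ** P = adj A ** A"
    and "A \<in> closure (H::'n::finite cmat set)"
  shows "\<exists>P\<in>closure H. psd P \<and> P ** P = adj A ** A"
proof -
  obtain As where As: "\<And>n. As n \<in> H" and lim: "As \<longlonglongrightarrow> A"
    using assms(2) closure_sequential by blast
  have "\<forall>n. \<exists>P. P \<in> H \<and> psd P \<and> P ** P = adj (As n) ** As n"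
    using H_sqrt As by blast
  then obtain Ps where "\<forall>n. Ps n \<in> H \<and> psd (Ps n) \<and> Ps n ** Ps n = adj (As n) ** As n"
    by (rule choice[THEN exE])
  then have Ps: "\<And>n. Ps n \<in> H" "\<And>n. psd (Ps n)" "\<And>n. Ps n ** Ps n = adj (As n) ** As n"
    by auto
  have "bounded (range As)"
    using lim by (rule convergent_imp_bounded)
  then obtain K where K: "\<And>n. norm (As n) \<le> K"
    unfolding bounded_iff by blast
  have "norm (Ps n) = norm (As n)" for n
    using Ps(2) Ps(3)[of n] by (intro norm_hermitian_sqrt) (simp_all add: psd_def)
  then have "bounded (range Ps)"
    unfolding bounded_iff using K by (intro exI[of _ K]) simp
  then obtain l r where r: "strict_mono r" and lr: "(Ps \<circ> r) \<longlonglongrightarrow> l"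
    using bounded_imp_convergent_subsequence by blast
  have "l \<in> closure H"
    unfolding closure_sequential using Ps(1) lr by (intro exI[of _ "Ps \<circ> r"]) simp
  moreover have "psd l"
    using psd_limit[OF _ lr] Ps(2) by simp
  moreover have "l ** l = adj A ** A"
  proof (rule LIMSEQ_unique)
    show "(\<lambda>n. (Ps \<circ> r) n ** (Ps \<circ> r) n) \<longlonglongrightarrow> l ** l"
      by (rule tendsto_matrix_mult[OF lr lr])
    have As_r: "(As \<circ> r) \<longlonglongrightarrow> A"
      by (rule LIMSEQ_subseq_LIMSEQ[OF lim r])
    have "(\<lambda>n. adj ((As \<circ> r) n) ** (As \<circ> r) n) \<longlonglongrightarrow> adj A ** A"
      by (rule tendsto_matrix_mult[OF bounded_linear.tendsto[OF bounded_linear_adj As_r] As_r])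
    then show "(\<lambda>n. (Ps \<circ> r) n ** (Ps \<circ> r) n) \<longlonglongrightarrow> adj A ** A"
      by (simp add: Ps(3))
  qed
  ultimately show ?thesis
    by blast
qed

theorem lemmaB2:
  fixes L H S :: "'n::finite cmat set"
  assumes L_compact: "compact L"
      and L_unitary: "L \<subseteq> unitary_group"
      and L_one: "mat 1 \<in> L"
      and L_mult: "\<And>a b. a \<in> L \<Longrightarrow> b \<in> L \<Longrightarrow> a ** b \<in> L"
      and L_inv: "\<And>a. a \<in> L \<Longrightarrow> adj a \<in> L"
      and H_def: "H = complexification L"
      and L_eq: "L = H \<inter> unitary_group"
      and S_def: "S = closure H"
      and S_normal: "normal_variety S"
      and S_monoid: "mat 1 \<in> S" "\<And>a b. a \<in> S \<Longrightarrow> b \<in> S \<Longrightarrow> a ** b \<in> S"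
  shows "\<forall>\<xi> \<in> muL L ` S. \<forall>B \<in> mu ` S. dstar L B = \<xi> \<longrightarrow>
           sec B \<in> S \<and> muL L (sec B) = \<xi>"
proof (intro ballI impI)
  fix \<xi> B
  assume "B \<in> mu ` S" and \<xi>: "dstar L B = \<xi>"
  then obtain A where "A \<in> S" and B: "B = mu A"
    by auto
  have "\<exists>P\<in>closure H. psd P \<and> P ** P = adj A ** A"
    using \<open>A \<in> S\<close> complexification_psd_sqrt[OF L_unitary L_one]
    by (intro closure_psd_sqrt) (simp_all add: H_def S_def)
  then obtain P where "P \<in> S" and P: "psd P" "P ** P = adj A ** A"
    using S_def by blast
  have "csmul (- \<i>) B = adj A ** A"
    by (simp add: B mu_def csmul_def vec_eq_iff)
  then have "sec B = P"
    unfolding sec_def using P by (simp add: msqrt_eqI)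
  moreover have "mu P = B"
    using P by (simp add: mu_def B psd_def hermitian_def)
  ultimately show "sec B \<in> S \<and> muL L (sec B) = \<xi>"
    using \<open>P \<in> S\<close> \<xi> by (simp add: muL_def)
qed

end
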